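(* Let $(G,Y)$ be a $C$-group and let $S(G,Y)$ be its factorization semigroup with product homomorphism $\alpha_G:S(G,Y)\to G$. Two elements $s_1,s_2\in S(G,Y)$ are equivalent if and only if $\alpha_G(s_1)=\alpha_G(s_2)$.
   Context: An equipped group is a pair $(G,O)$ where $G$ is a group and $O\subset G$ is a union of finitely many conjugacy classes of $G$ with $1\notin O$. A $C$-group is an equipped group $(G,Y)$ such that $G$ admits a presentation whose generators are the elements of $Y$ and all of whose defining relations have the form $z^{-1}yz=y'$ with $y,y',z\in Y$. The factorization semigroup $S(G,O)$ is the semigroup generated by symbols $x_g$, $g\in O$, subject to the relations $x_{g_1}x_{g_2}=x_{g_2}x_{g_2^{-1}g_1g_2}=x_{g_1g_2g_1^{-1}}x_{g_1}$ for all $g_1,g_2\in O$; the product homomorphism $\alpha_G:S(G,O)\to G$ is given by $x_g\mapsto g$. Two elements $s_1,s_2$ of a semigroup $S$ are called equivalent if there exist $s_3,s_4\in S$ with $s_3s_1s_4=s_3s_2s_4$. *)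

theory Defs
  imports "HOL-Algebra.Group"
begin

definition conj_class :: "('a, 'b) monoid_scheme \<Rightarrow> 'a \<Rightarrow> 'a set" where
  "conj_class G g = {h \<otimes>\<^bsub>G\<^esub> g \<otimes>\<^bsub>G\<^esub> inv\<^bsub>G\<^esub> h | h. h \<in> carrier G}"

definition equipped_group :: "('a, 'b) monoid_scheme \<Rightarrow> 'a set \<Rightarrow> bool" where
  "equipped_group G Ob \<longleftrightarrow> group G \<and> Ob \<subseteq> carrier G \<and> \<one>\<^bsub>G\<^esub> \<notin> Ob \<and>
     (\<exists>F. finite F \<and> F \<subseteq> carrier G \<and> Ob = (\<Union>g\<in>F. conj_class G g))"

text \<open>Letters are pairs (y, b): b = True means y, b = False means y inverse.\<close>
definition letter_val :: "('a, 'b) monoid_scheme \<Rightarrow> 'a \<times> bool \<Rightarrow> 'a" where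
  "letter_val G l = (if snd l then fst l else inv\<^bsub>G\<^esub> (fst l))"

definition word_val :: "('a, 'b) monoid_scheme \<Rightarrow> ('a \<times> bool) list \<Rightarrow> 'a" where
  "word_val G w = foldr (\<lambda>l x. letter_val G l \<otimes>\<^bsub>G\<^esub> x) w \<one>\<^bsub>G\<^esub>"

text \<open>The congruence on words in Y^{+-1} generated by free cancellation and by
  the relators z^{-1} y z = y' for (y, y', z) in R; words modulo this congruence
  form the group with presentation < Y | R >.\<close>
inductive pres_eq :: "'a set \<Rightarrow> ('a \<times> 'a \<times> 'a) set \<Rightarrow> ('a \<times> bool) list \<Rightarrow> ('a \<times> bool) list \<Rightarrow> bool"
  for Y R where
  pres_refl: "pres_eq Y R w w"
| pres_sym: "pres_eq Y R v w \<Longrightarrow> pres_eq Y R w v"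
| pres_trans: "pres_eq Y R u v \<Longrightarrow> pres_eq Y R v w \<Longrightarrow> pres_eq Y R u w"
| pres_ctxt: "pres_eq Y R v w \<Longrightarrow> pres_eq Y R (u @ v @ x) (u @ w @ x)"
| pres_cancel: "y \<in> Y \<Longrightarrow> pres_eq Y R [(y, b), (y, \<not> b)] []"
| pres_rel: "(y, y', z) \<in> R \<Longrightarrow> pres_eq Y R [(z, False), (y, True), (z, True)] [(y', True)]"

text \<open>G has the presentation < Y | R > (with generators mapped identically):
  Y generates G and the canonical map from < Y | R > to G is a well-defined
  bijection, i.e. two words have the same value in G iff they are equal in < Y | R >.\<close>
definition presents :: "('a, 'b) monoid_scheme \<Rightarrow> 'a set \<Rightarrow> ('a \<times> 'a \<times> 'a) set \<Rightarrow> bool" where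
  "presents G Y R \<longleftrightarrow>
     Y \<subseteq> carrier G \<and>
     carrier G = word_val G ` lists (Y \<times> UNIV) \<and>
     (\<forall>v \<in> lists (Y \<times> UNIV). \<forall>w \<in> lists (Y \<times> UNIV).
        word_val G v = word_val G w \<longleftrightarrow> pres_eq Y R v w)"

definition C_group :: "('a, 'b) monoid_scheme \<Rightarrow> 'a set \<Rightarrow> bool" where
  "C_group G Y \<longleftrightarrow> equipped_group G Y \<and> (\<exists>R \<subseteq> Y \<times> Y \<times> Y. presents G Y R)"

text \<open>Elements of S(G,Ob) are represented by nonempty words over Ob; fs_eq is the
  semigroup congruence generated by the defining relations
  x_{g1} x_{g2} = x_{g2} x_{g2^{-1} g1 g2} = x_{g1 g2 g1^{-1}} x_{g1}.\<close>
inductive fs_eq :: "('a, 'b) monoid_scheme \<Rightarrow> 'a set \<Rightarrow> 'a list \<Rightarrow> 'a list \<Rightarrow> bool"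
  for G Ob where
  fs_refl: "fs_eq G Ob w w"
| fs_sym: "fs_eq G Ob v w \<Longrightarrow> fs_eq G Ob w v"
| fs_trans: "fs_eq G Ob u v \<Longrightarrow> fs_eq G Ob v w \<Longrightarrow> fs_eq G Ob u w"
| fs_ctxt: "fs_eq G Ob v w \<Longrightarrow> u \<in> lists Ob \<Longrightarrow> x \<in> lists Ob \<Longrightarrow> fs_eq G Ob (u @ v @ x) (u @ w @ x)"
| fs_rel1: "g1 \<in> Ob \<Longrightarrow> g2 \<in> Ob \<Longrightarrow>
     fs_eq G Ob [g1, g2] [g2, inv\<^bsub>G\<^esub> g2 \<otimes>\<^bsub>G\<^esub> g1 \<otimes>\<^bsub>G\<^esub> g2]"
| fs_rel2: "g1 \<in> Ob \<Longrightarrow> g2 \<in> Ob \<Longrightarrow>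
     fs_eq G Ob [g1, g2] [g1 \<otimes>\<^bsub>G\<^esub> g2 \<otimes>\<^bsub>G\<^esub> inv\<^bsub>G\<^esub> g1, g1]"

definition fs_words :: "'a set \<Rightarrow> 'a list set" where
  "fs_words Ob = {w. w \<in> lists Ob \<and> w \<noteq> []}"

definition fs_prod :: "('a, 'b) monoid_scheme \<Rightarrow> 'a list \<Rightarrow> 'a" where
  "fs_prod G w = foldr (\<lambda>g x. g \<otimes>\<^bsub>G\<^esub> x) w \<one>\<^bsub>G\<^esub>"

definition fs_equivalent :: "('a, 'b) monoid_scheme \<Rightarrow> 'a set \<Rightarrow> 'a list \<Rightarrow> 'a list \<Rightarrow> bool" where
  "fs_equivalent G Ob s1 s2 \<longleftrightarrow>
     (\<exists>s3 \<in> fs_words Ob. \<exists>s4 \<in> fs_words Ob. fs_eq G Ob (s3 @ s1 @ s4) (s3 @ s2 @ s4))"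

end

theory Submission imports Defs begin

text \<open>Call two words over a conjugation-invariant set Y \<subseteq> G stably equal if they become
  equal in the factorization semigroup after multiplying by the same words on both sides.
  Stable equality is a congruence, it is cancellative, it implies equality of products, and
  any two words commute up to conjugation: p q ~ (p q p\<inverse>) p.  Hence the monoid of words modulo
  stable equality satisfies the Ore condition and embeds into its group of fractions
  A\<inverse>B.  Interpreting a generator y as the fraction []\<inverse>[y] and y\<inverse> as [y]\<inverse>[] is
  compatible with the relators z\<inverse> y z = y' of a C-group presentation, so two words over Y
  with equal product in G have equal fractions []\<inverse>s1 = []\<inverse>s2, i.e. are stably equal.\<close>

definition conj_word :: "('a, 'b) monoid_scheme \<Rightarrow> 'a \<Rightarrow> 'a list \<Rightarrow> 'a list" where
  "conj_word G h w = map (\<lambda>x. h \<otimes>\<^bsub>G\<^esub> x \<otimes>\<^bsub>G\<^esub> inv\<^bsub>G\<^esub> h) w"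

definition stable_eq :: "('a, 'b) monoid_scheme \<Rightarrow> 'a set \<Rightarrow> 'a list \<Rightarrow> 'a list \<Rightarrow> bool" where
  "stable_eq G Y a b \<longleftrightarrow> a \<in> lists Y \<and> b \<in> lists Y \<and>
     (\<exists>c \<in> lists Y. \<exists>d \<in> lists Y. fs_eq G Y (c @ a @ d) (c @ b @ d))"

text \<open>A pair (A, B) stands for the fraction A\<inverse>B; since B A'\<inverse> = A'\<inverse>(A' B A'\<inverse>), the product
  A\<inverse>B A'\<inverse>B' is (A' A)\<inverse> (A' B A'\<inverse>) B'.\<close>
definition frac_mult :: "('a, 'b) monoid_scheme \<Rightarrow> 'a list \<times> 'a list \<Rightarrow> 'a list \<times> 'a list \<Rightarrow> 'a list \<times> 'a list" where
  "frac_mult G P Q = (fst Q @ fst P, conj_word G (fs_prod G (fst Q)) (snd P) @ snd Q)"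

definition frac_eq :: "('a, 'b) monoid_scheme \<Rightarrow> 'a set \<Rightarrow> 'a list \<times> 'a list \<Rightarrow> 'a list \<times> 'a list \<Rightarrow> bool" where
  "frac_eq G Y P Q \<longleftrightarrow> (\<exists>u \<in> lists Y. \<exists>v \<in> lists Y.
     stable_eq G Y (u @ fst P) (v @ fst Q) \<and> stable_eq G Y (u @ snd P) (v @ snd Q))"

fun letter_frac :: "'a \<times> bool \<Rightarrow> 'a list \<times> 'a list" where
  "letter_frac (y, b) = (if b then ([], [y]) else ([y], []))"

fun word_frac :: "('a, 'b) monoid_scheme \<Rightarrow> ('a \<times> bool) list \<Rightarrow> 'a list \<times> 'a list" where
  "word_frac G [] = ([], [])"
| "word_frac G (l # w) = frac_mult G (letter_frac l) (word_frac G w)"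

lemma fs_prod_Nil: "fs_prod G [] = \<one>\<^bsub>G\<^esub>"
  by (simp add: fs_prod_def)

lemma fs_prod_Cons: "fs_prod G (g # w) = g \<otimes>\<^bsub>G\<^esub> fs_prod G w"
  by (simp add: fs_prod_def)

lemma fs_eq_append_right: "fs_eq G Y v w \<Longrightarrow> x \<in> lists Y \<Longrightarrow> fs_eq G Y (v @ x) (w @ x)"
  using fs_ctxt[of G Y v w "[]" x] by simp

lemma fs_eq_append_left: "fs_eq G Y v w \<Longrightarrow> u \<in> lists Y \<Longrightarrow> fs_eq G Y (u @ v) (u @ w)"
  using fs_ctxt[of G Y v w u "[]"] by simp

lemma fs_eq_sandwich:
  assumes "fs_eq G Y X X'" "fs_eq G Y Z Z'" "X' \<in> lists Y" "x \<in> lists Y" "Z \<in> lists Y"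
  shows "fs_eq G Y (X @ x @ Z) (X' @ x @ Z')"
proof -
  have "fs_eq G Y (X @ (x @ Z)) (X' @ (x @ Z))" using fs_eq_append_right[OF assms(1)] assms(4,5) by simp
  moreover have "fs_eq G Y (X' @ (x @ Z)) (X' @ (x @ Z'))"
    using fs_eq_append_left[OF fs_eq_append_left[OF assms(2,4)] assms(3)] .
  ultimately show ?thesis by (rule fs_trans)
qed

lemma fs_equivalent_iff_stable_eq:
  assumes "s1 \<in> fs_words Y" "s2 \<in> fs_words Y"
  shows "fs_equivalent G Y s1 s2 \<longleftrightarrow> stable_eq G Y s1 s2"
proof
  assume "stable_eq G Y s1 s2"
  then obtain c d where c: "c \<in> lists Y" and d: "d \<in> lists Y"
    and eq: "fs_eq G Y (c @ s1 @ d) (c @ s2 @ d)"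
    unfolding stable_eq_def by blast
  obtain y where y: "y \<in> Y" using assms(1) by (cases s1) (auto simp: fs_words_def)
  have "fs_eq G Y ([y] @ (c @ s1 @ d) @ [y]) ([y] @ (c @ s2 @ d) @ [y])"
    using fs_ctxt[OF eq, of "[y]" "[y]"] y by simp
  then show "fs_equivalent G Y s1 s2"
    unfolding fs_equivalent_def fs_words_def using c d y
    by (intro bexI[of _ "y # c"] bexI[of _ "d @ [y]"]) auto
qed (use assms in \<open>auto simp: fs_equivalent_def stable_eq_def fs_words_def\<close>)

locale conj_invariant_subset = group G for G (structure) +
  fixes Y
  assumes subset: "Y \<subseteq> carrier G"
    and conj_closed: "\<And>h y. h \<in> carrier G \<Longrightarrow> y \<in> Y \<Longrightarrow> h \<otimes> y \<otimes> inv h \<in> Y"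
begin

lemma fs_prod_closed: "w \<in> lists Y \<Longrightarrow> fs_prod G w \<in> carrier G"
  using subset by (induction w) (auto simp: fs_prod_def)

lemma fs_prod_append: "a \<in> lists Y \<Longrightarrow> b \<in> lists Y \<Longrightarrow> fs_prod G (a @ b) = fs_prod G a \<otimes> fs_prod G b"
proof (induction a)
  case (Cons g a)
  then have "g \<in> carrier G" using subset by auto
  with Cons show ?case by (simp add: fs_prod_Cons fs_prod_closed m_assoc)
qed (simp add: fs_prod_Nil fs_prod_closed)

lemma conj_word_in_lists: "h \<in> carrier G \<Longrightarrow> w \<in> lists Y \<Longrightarrow> conj_word G h w \<in> lists Y"
  by (auto simp: conj_word_def conj_closed)

lemma conj_word_mult:
  "g \<in> carrier G \<Longrightarrow> h \<in> carrier G \<Longrightarrow> w \<in> lists Y \<Longrightarrow>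
    conj_word G g (conj_word G h w) = conj_word G (g \<otimes> h) w"
  using subset by (induction w) (auto simp: conj_word_def m_assoc inv_mult_group)

lemma conj_word_one: "w \<in> lists Y \<Longrightarrow> conj_word G \<one> w = w"
  using subset by (induction w) (auto simp: conj_word_def)

lemma conj_word_append: "conj_word G h (a @ b) = conj_word G h a @ conj_word G h b"
  by (simp add: conj_word_def)

lemma fs_eq_commute_letter: "g \<in> Y \<Longrightarrow> q \<in> lists Y \<Longrightarrow> fs_eq G Y (g # q) (conj_word G g q @ [g])"
proof (induction q)
  case Nil
  then show ?case by (simp add: conj_word_def fs_refl)
next
  case (Cons q1 qs)
  have "fs_eq G Y [g, q1] [g \<otimes> q1 \<otimes> inv g, g]"
    using Cons by (auto intro: fs_rel2)
  from fs_eq_append_right[OF this, of qs]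
  have "fs_eq G Y (g # q1 # qs) ((g \<otimes> q1 \<otimes> inv g) # g # qs)"
    using Cons by simp
  moreover have "fs_eq G Y ([g \<otimes> q1 \<otimes> inv g] @ (g # qs)) ([g \<otimes> q1 \<otimes> inv g] @ (conj_word G g qs @ [g]))"
    using Cons subset by (intro fs_eq_append_left) (auto intro: conj_closed)
  ultimately show ?case by (simp add: conj_word_def fs_trans)
qed

lemma fs_eq_commute: "p \<in> lists Y \<Longrightarrow> q \<in> lists Y \<Longrightarrow> fs_eq G Y (p @ q) (conj_word G (fs_prod G p) q @ p)"
proof (induction p)
  case Nil
  then show ?case by (simp add: fs_prod_Nil conj_word_one fs_refl)
next
  case (Cons g p)
  have g: "g \<in> carrier G" and gY: "g \<in> Y" and p: "p \<in> lists Y" using Cons subset by auto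
  define q' where "q' = conj_word G (fs_prod G p) q"
  have q': "q' \<in> lists Y" using conj_word_in_lists fs_prod_closed p Cons q'_def by auto
  have "fs_eq G Y ([g] @ (p @ q)) ([g] @ (q' @ p))"
    using Cons q'_def by (intro fs_eq_append_left) auto
  moreover have "fs_eq G Y ((g # q') @ p) ((conj_word G g q' @ [g]) @ p)"
    using fs_eq_append_right[OF fs_eq_commute_letter[OF gY q'] p] .
  moreover have "conj_word G g q' = conj_word G (fs_prod G (g # p)) q"
    using conj_word_mult g fs_prod_closed p Cons q'_def by (simp add: fs_prod_Cons)
  ultimately show ?case by (simp add: fs_trans)
qed

lemma fs_eq_commute_inv:
  assumes p: "p \<in> lists Y" and d: "d \<in> lists Y"
  shows "fs_eq G Y (p @ conj_word G (inv (fs_prod G p)) d) (d @ p)"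
proof -
  have "fs_prod G p \<in> carrier G" using p fs_prod_closed by auto
  moreover from this have "conj_word G (fs_prod G p) (conj_word G (inv (fs_prod G p)) d) = d"
    using conj_word_mult d conj_word_one by simp
  ultimately show ?thesis using fs_eq_commute[OF p conj_word_in_lists[OF _ d]] by (metis inv_closed)
qed

lemma fs_eq_fs_prod:
  "fs_eq G Y v w \<Longrightarrow> (v \<in> lists Y \<longleftrightarrow> w \<in> lists Y) \<and> (v \<in> lists Y \<longrightarrow> fs_prod G v = fs_prod G w)"
proof (induction rule: fs_eq.induct)
  case (fs_ctxt v w u x)
  then show ?case by (auto simp: fs_prod_append)
next
  case (fs_rel1 g1 g2)
  then have c: "g1 \<in> carrier G" "g2 \<in> carrier G" using subset by auto
  have "inv g2 \<otimes> g1 \<otimes> inv (inv g2) \<in> Y" using conj_closed[of "inv g2" g1] fs_rel1 c by simp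
  moreover have "g2 \<otimes> (inv g2 \<otimes> (g1 \<otimes> g2)) = g1 \<otimes> g2" using c by (simp add: m_assoc[symmetric])
  ultimately show ?case using fs_rel1 c by (auto simp: fs_prod_Cons fs_prod_Nil m_assoc)
next
  case (fs_rel2 g1 g2)
  then have "g1 \<in> carrier G" "g2 \<in> carrier G" using subset by auto
  moreover have "g1 \<otimes> g2 \<otimes> inv g1 \<in> Y" using conj_closed fs_rel2 calculation by auto
  ultimately show ?case using fs_rel2 by (auto simp: fs_prod_Cons fs_prod_Nil m_assoc)
qed auto

lemma stable_eq_of_fs_eq: "fs_eq G Y a b \<Longrightarrow> a \<in> lists Y \<Longrightarrow> b \<in> lists Y \<Longrightarrow> stable_eq G Y a b"
  unfolding stable_eq_def by (intro conjI bexI[of _ "[]"]) auto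

lemma stable_eq_refl: "a \<in> lists Y \<Longrightarrow> stable_eq G Y a a"
  by (simp add: stable_eq_of_fs_eq fs_refl)

lemma stable_eq_sym: "stable_eq G Y a b \<Longrightarrow> stable_eq G Y b a"
  unfolding stable_eq_def by (blast intro: fs_sym)

lemma stable_eq_lists: "stable_eq G Y a b \<Longrightarrow> a \<in> lists Y \<and> b \<in> lists Y"
  unfolding stable_eq_def by blast

lemma stable_eq_fs_prod: "stable_eq G Y a b \<Longrightarrow> fs_prod G a = fs_prod G b"
proof -
  assume "stable_eq G Y a b"
  then obtain c d where a: "a \<in> lists Y" and b: "b \<in> lists Y" and c: "c \<in> lists Y" and d: "d \<in> lists Y"
    and eq: "fs_eq G Y (c @ a @ d) (c @ b @ d)" unfolding stable_eq_def by blast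
  have "fs_prod G (c @ a @ d) = fs_prod G (c @ b @ d)" using fs_eq_fs_prod[OF eq] a c d by auto
  then have "fs_prod G c \<otimes> fs_prod G a \<otimes> fs_prod G d = fs_prod G c \<otimes> fs_prod G b \<otimes> fs_prod G d"
    using a b c d by (simp add: fs_prod_append m_assoc fs_prod_closed)
  then show ?thesis using a b c d fs_prod_closed by (simp add: m_assoc Units_eq)
qed

lemma stable_eq_cancel:
  assumes "stable_eq G Y (c @ a @ d) (c @ b @ d)" "c \<in> lists Y" "d \<in> lists Y" "a \<in> lists Y" "b \<in> lists Y"
  shows "stable_eq G Y a b"
proof -
  from assms(1) obtain c' d' where "c' \<in> lists Y" "d' \<in> lists Y"
    and "fs_eq G Y (c' @ (c @ a @ d) @ d') (c' @ (c @ b @ d) @ d')" unfolding stable_eq_def by blast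
  with assms show ?thesis unfolding stable_eq_def
    by (intro conjI bexI[of _ "c' @ c"] bexI[of _ "d @ d'"]) auto
qed

lemma fs_eq_move_context:
  assumes c: "c \<in> lists Y" and d: "d \<in> lists Y" and p: "p \<in> lists Y" and q: "q \<in> lists Y"
    and x: "x \<in> lists Y"
  shows "fs_eq G Y (p @ (c @ x @ d) @ q)
    (conj_word G (fs_prod G p) c @ (p @ x @ q) @ conj_word G (inv (fs_prod G q)) d)"
proof -
  have "conj_word G (fs_prod G p) c \<in> lists Y" "conj_word G (inv (fs_prod G q)) d \<in> lists Y"
    using conj_word_in_lists fs_prod_closed c d p q by auto
  then have "fs_eq G Y ((p @ c) @ x @ (d @ q))
      ((conj_word G (fs_prod G p) c @ p) @ x @ (q @ conj_word G (inv (fs_prod G q)) d))"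
    using fs_eq_commute[OF p c] fs_sym[OF fs_eq_commute_inv[OF q d]] c d p q x
    by (intro fs_eq_sandwich) auto
  then show ?thesis by simp
qed

lemma stable_eq_context:
  assumes ab: "stable_eq G Y a b" and p: "p \<in> lists Y" and q: "q \<in> lists Y"
  shows "stable_eq G Y (p @ a @ q) (p @ b @ q)"
proof -
  from ab obtain c d where a: "a \<in> lists Y" and b: "b \<in> lists Y" and c: "c \<in> lists Y" and d: "d \<in> lists Y"
    and eq: "fs_eq G Y (c @ a @ d) (c @ b @ d)" unfolding stable_eq_def by blast
  define C where "C = conj_word G (fs_prod G p) c"
  define D where "D = conj_word G (inv (fs_prod G q)) d"
  have "C \<in> lists Y" "D \<in> lists Y"
    unfolding C_def D_def using conj_word_in_lists fs_prod_closed c d p q by auto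
  moreover have "fs_eq G Y (C @ (p @ a @ q) @ D) (C @ (p @ b @ q) @ D)"
    using fs_ctxt[OF eq p q] fs_eq_move_context[OF c d p q a] fs_eq_move_context[OF c d p q b]
    unfolding C_def D_def by (meson fs_sym fs_trans)
  ultimately show ?thesis unfolding stable_eq_def using a b p q by auto
qed

lemma stable_eq_trans [trans]:
  assumes ab: "stable_eq G Y a b" and bc: "stable_eq G Y b c"
  shows "stable_eq G Y a c"
proof -
  from ab obtain c1 d1 where a: "a \<in> lists Y" and b: "b \<in> lists Y" and c1: "c1 \<in> lists Y"
    and d1: "d1 \<in> lists Y" and eq1: "fs_eq G Y (c1 @ a @ d1) (c1 @ b @ d1)" unfolding stable_eq_def by blast
  from bc obtain c2 d2 where c: "c \<in> lists Y" and c2: "c2 \<in> lists Y" and d2: "d2 \<in> lists Y"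
    and eq2: "fs_eq G Y (c2 @ b @ d2) (c2 @ c @ d2)" unfolding stable_eq_def by blast
  define C where "C = conj_word G (fs_prod G c2) c1"
  define D where "D = conj_word G (inv (fs_prod G d2)) d1"
  have "C \<in> lists Y" "D \<in> lists Y"
    unfolding C_def D_def using conj_word_in_lists fs_prod_closed c1 c2 d1 d2 by auto
  then have "fs_eq G Y (C @ (c2 @ b @ d2) @ D) (C @ (c2 @ c @ d2) @ D)" using fs_ctxt[OF eq2] by blast
  then have "fs_eq G Y (c2 @ (c1 @ a @ d1) @ d2) (c2 @ (c1 @ c @ d1) @ d2)"
    using fs_ctxt[OF eq1 c2 d2] fs_eq_move_context[OF c1 d1 c2 d2 b] fs_eq_move_context[OF c1 d1 c2 d2 c]
    unfolding C_def D_def by (meson fs_sym fs_trans)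
  then show ?thesis unfolding stable_eq_def using a c c1 c2 d1 d2
    by (intro conjI bexI[of _ "c2 @ c1"] bexI[of _ "d1 @ d2"]) auto
qed

lemma stable_eq_append_right: "stable_eq G Y a b \<Longrightarrow> c \<in> lists Y \<Longrightarrow> stable_eq G Y (a @ c) (b @ c)"
  using stable_eq_context[of a b "[]" c] by simp

lemma stable_eq_append_left: "stable_eq G Y a b \<Longrightarrow> c \<in> lists Y \<Longrightarrow> stable_eq G Y (c @ a) (c @ b)"
  using stable_eq_context[of a b c "[]"] by simp

lemma stable_eq_commute: "p \<in> lists Y \<Longrightarrow> q \<in> lists Y \<Longrightarrow> stable_eq G Y (p @ q) (conj_word G (fs_prod G p) q @ p)"
  using fs_eq_commute stable_eq_of_fs_eq conj_word_in_lists fs_prod_closed by auto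

lemma stable_eq_conj_word:
  assumes ab: "stable_eq G Y a b" and D: "D \<in> lists Y"
  shows "stable_eq G Y (conj_word G (fs_prod G D) a) (conj_word G (fs_prod G D) b)"
proof -
  have a: "a \<in> lists Y" and b: "b \<in> lists Y" using stable_eq_lists[OF ab] by auto
  have "fs_prod G D \<in> carrier G" using D fs_prod_closed by simp
  then have conj: "conj_word G (fs_prod G D) a \<in> lists Y" "conj_word G (fs_prod G D) b \<in> lists Y"
    using conj_word_in_lists a b by auto
  have "stable_eq G Y (conj_word G (fs_prod G D) a @ D) (D @ a)"
    using stable_eq_sym[OF stable_eq_commute[OF D a]] .
  also have "stable_eq G Y (D @ a) (D @ b)" using stable_eq_append_left[OF ab D] .
  also have "stable_eq G Y (D @ b) (conj_word G (fs_prod G D) b @ D)" using stable_eq_commute[OF D b] .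
  finally show ?thesis using stable_eq_cancel[where c = "[]", OF _ _ D conj] by simp
qed

lemma frac_mult_closed: "P \<in> lists Y \<times> lists Y \<Longrightarrow> Q \<in> lists Y \<times> lists Y \<Longrightarrow> frac_mult G P Q \<in> lists Y \<times> lists Y"
  unfolding frac_mult_def using conj_word_in_lists fs_prod_closed by (auto simp: mem_Times_iff)

lemma word_frac_closed: "w \<in> lists (Y \<times> UNIV) \<Longrightarrow> word_frac G w \<in> lists Y \<times> lists Y"
proof (induction w)
  case (Cons l w)
  then have "letter_frac l \<in> lists Y \<times> lists Y" by (cases l) auto
  then show ?case using Cons frac_mult_closed by auto
qed simp

lemma frac_mult_assoc:
  "P \<in> lists Y \<times> lists Y \<Longrightarrow> Q \<in> lists Y \<times> lists Y \<Longrightarrow> S \<in> lists Y \<times> lists Y \<Longrightarrow>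
    frac_mult G P (frac_mult G Q S) = frac_mult G (frac_mult G P Q) S"
  unfolding frac_mult_def
  by (auto simp: mem_Times_iff conj_word_append fs_prod_append conj_word_mult fs_prod_closed conj_word_in_lists)

lemma word_frac_append:
  "v \<in> lists (Y \<times> UNIV) \<Longrightarrow> w \<in> lists (Y \<times> UNIV) \<Longrightarrow>
    word_frac G (v @ w) = frac_mult G (word_frac G v) (word_frac G w)"
proof (induction v)
  case Nil
  then show ?case by (simp add: frac_mult_def conj_word_def)
next
  case (Cons l v)
  then have "letter_frac l \<in> lists Y \<times> lists Y" by (cases l) auto
  then show ?case using Cons frac_mult_assoc word_frac_closed by auto
qed

lemma frac_eq_refl: "P \<in> lists Y \<times> lists Y \<Longrightarrow> frac_eq G Y P P"
  unfolding frac_eq_def using stable_eq_refl by (intro bexI[of _ "[]"]) (auto simp: mem_Times_iff)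

lemma frac_eq_sym: "frac_eq G Y P Q \<Longrightarrow> frac_eq G Y Q P"
  unfolding frac_eq_def using stable_eq_sym by blast

text \<open>Ore condition: v' v ~ w v' with w = conj_word G (fs_prod G v') v is a common left multiple
  of v and v'.\<close>
lemma frac_eq_trans:
  assumes "frac_eq G Y P Q" "frac_eq G Y Q S"
  shows "frac_eq G Y P S"
proof -
  from assms obtain u v v' u' where u: "u \<in> lists Y" and v: "v \<in> lists Y" and v': "v' \<in> lists Y"
    and u': "u' \<in> lists Y"
    and PQ: "stable_eq G Y (u @ fst P) (v @ fst Q)" "stable_eq G Y (u @ snd P) (v @ snd Q)"
    and QS: "stable_eq G Y (v' @ fst Q) (u' @ fst S)" "stable_eq G Y (v' @ snd Q) (u' @ snd S)"
    unfolding frac_eq_def by blast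
  define w where "w = conj_word G (fs_prod G v') v"
  have w: "w \<in> lists Y" unfolding w_def using conj_word_in_lists fs_prod_closed v v' by auto
  have commute: "stable_eq G Y (v' @ v) (w @ v')" unfolding w_def using stable_eq_commute v v' by auto
  have chain: "stable_eq G Y ((v' @ u) @ x) ((w @ u') @ z)"
    if xy: "stable_eq G Y (u @ x) (v @ y)" and yz: "stable_eq G Y (v' @ y) (u' @ z)" for x y z
  proof -
    have y: "y \<in> lists Y" using stable_eq_lists[OF xy] by auto
    have "stable_eq G Y ((v' @ u) @ x) (v' @ (v @ y))" using stable_eq_append_left[OF xy v'] by simp
    also have "stable_eq G Y \<dots> ((w @ v') @ y)" using stable_eq_append_right[OF commute y] by simp
    also have "stable_eq G Y \<dots> ((w @ u') @ z)" using stable_eq_append_left[OF yz w] by simp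
    finally show ?thesis .
  qed
  have "v' @ u \<in> lists Y" "w @ u' \<in> lists Y" using u v' u' w by auto
  with chain[OF PQ(1) QS(1)] chain[OF PQ(2) QS(2)] show ?thesis unfolding frac_eq_def by blast
qed

lemma frac_eq_mult_left:
  assumes PP': "frac_eq G Y P P'"
    and U: "U \<in> lists Y \<times> lists Y" and P: "P \<in> lists Y \<times> lists Y" and P': "P' \<in> lists Y \<times> lists Y"
  shows "frac_eq G Y (frac_mult G U P) (frac_mult G U P')"
proof -
  from PP' obtain u u' where u: "u \<in> lists Y" and u': "u' \<in> lists Y"
    and fst_eq: "stable_eq G Y (u @ fst P) (u' @ fst P')" and snd_eq: "stable_eq G Y (u @ snd P) (u' @ snd P')"
    unfolding frac_eq_def by blast
  have move: "stable_eq G Y (x @ conj_word G (fs_prod G (fst Q)) (snd U) @ snd Q)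
      (conj_word G (fs_prod G (x @ fst Q)) (snd U) @ (x @ snd Q))"
    if x: "x \<in> lists Y" and Q: "Q \<in> lists Y \<times> lists Y" for x Q
  proof -
    have q: "fs_prod G (fst Q) \<in> carrier G" using Q fs_prod_closed by (auto simp: mem_Times_iff)
    have cu: "conj_word G (fs_prod G (fst Q)) (snd U) \<in> lists Y"
      using conj_word_in_lists q U by (auto simp: mem_Times_iff)
    have "conj_word G (fs_prod G x) (conj_word G (fs_prod G (fst Q)) (snd U)) =
        conj_word G (fs_prod G (x @ fst Q)) (snd U)"
      using conj_word_mult fs_prod_closed x q U Q fs_prod_append by (auto simp: mem_Times_iff)
    then show ?thesis
      using stable_eq_append_right[OF stable_eq_commute[OF x cu], of "snd Q"] Q
      by (auto simp: mem_Times_iff)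
  qed
  have "stable_eq G Y ((u @ fst P) @ fst U) ((u' @ fst P') @ fst U)"
    using stable_eq_append_right[OF fst_eq] U by (auto simp: mem_Times_iff)
  moreover have "stable_eq G Y (u @ conj_word G (fs_prod G (fst P)) (snd U) @ snd P)
      (u' @ conj_word G (fs_prod G (fst P')) (snd U) @ snd P')"
  proof -
    have "stable_eq G Y (conj_word G (fs_prod G (u @ fst P)) (snd U) @ (u @ snd P))
        (conj_word G (fs_prod G (u' @ fst P')) (snd U) @ (u' @ snd P'))"
      using stable_eq_append_left[OF snd_eq] stable_eq_fs_prod[OF fst_eq] conj_word_in_lists
        fs_prod_closed U u' P' by (auto simp: mem_Times_iff)
    then show ?thesis using move[OF u P] move[OF u' P'] stable_eq_trans stable_eq_sym by blast
  qed
  ultimately show ?thesis unfolding frac_eq_def frac_mult_def using u u' by auto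
qed

lemma frac_eq_mult_right:
  assumes PP': "frac_eq G Y P P'"
    and X: "X \<in> lists Y \<times> lists Y" and P: "P \<in> lists Y \<times> lists Y" and P': "P' \<in> lists Y \<times> lists Y"
  shows "frac_eq G Y (frac_mult G P X) (frac_mult G P' X)"
proof -
  from PP' obtain u u' where u: "u \<in> lists Y" and u': "u' \<in> lists Y"
    and fst_eq: "stable_eq G Y (u @ fst P) (u' @ fst P')" and snd_eq: "stable_eq G Y (u @ snd P) (u' @ snd P')"
    unfolding frac_eq_def by blast
  define h where "h = fs_prod G (fst X)"
  have x: "fst X \<in> lists Y" using X by (auto simp: mem_Times_iff)
  have "h \<in> carrier G" unfolding h_def using x fs_prod_closed by auto
  then have hu: "conj_word G h u \<in> lists Y" "conj_word G h u' \<in> lists Y"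
    using conj_word_in_lists u u' by auto
  have commute: "stable_eq G Y (conj_word G h z @ fst X) (fst X @ z)" if "z \<in> lists Y" for z
    unfolding h_def using stable_eq_commute x stable_eq_sym that by blast
  have "stable_eq G Y ((conj_word G h u @ fst X) @ fst P) ((fst X @ u) @ fst P)"
    using stable_eq_append_right[OF commute[OF u]] P by (auto simp: mem_Times_iff)
  also have "stable_eq G Y \<dots> (fst X @ (u' @ fst P'))"
    using stable_eq_append_left[OF fst_eq x] by simp
  also have "stable_eq G Y \<dots> ((conj_word G h u' @ fst X) @ fst P')"
    using stable_eq_append_right[OF stable_eq_sym[OF commute[OF u']]] P' by (auto simp: mem_Times_iff)
  finally have "stable_eq G Y (conj_word G h u @ fst X @ fst P) (conj_word G h u' @ fst X @ fst P')"
    by simp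
  moreover have "stable_eq G Y (conj_word G h u @ conj_word G h (snd P) @ snd X)
      (conj_word G h u' @ conj_word G h (snd P') @ snd X)"
    using stable_eq_append_right[OF stable_eq_conj_word[OF snd_eq x], of "snd X"] X
    by (simp add: conj_word_append h_def mem_Times_iff)
  ultimately show ?thesis unfolding frac_eq_def frac_mult_def using hu h_def by auto
qed

lemma frac_eq_cancel_letter: "y \<in> Y \<Longrightarrow> frac_eq G Y (word_frac G [(y, b), (y, \<not> b)]) ([], [])"
proof -
  assume y: "y \<in> Y"
  then have "word_frac G [(y, b), (y, \<not> b)] = ([y], [y])"
    using subset by (cases b) (auto simp: frac_mult_def conj_word_def fs_prod_Nil fs_prod_Cons m_assoc)
  moreover have "frac_eq G Y ([y], [y]) ([], [])"
    unfolding frac_eq_def using y stable_eq_refl by (intro bexI[of _ "[]"] bexI[of _ "[y]"]) auto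
  ultimately show ?thesis by simp
qed

lemma frac_eq_relator:
  assumes y: "y \<in> Y" and z: "z \<in> Y" and y': "y' = inv z \<otimes> y \<otimes> z"
  shows "frac_eq G Y (word_frac G [(z, False), (y, True), (z, True)]) (word_frac G [(y', True)])"
proof -
  have yz: "y \<in> carrier G" "z \<in> carrier G" using y z subset by auto
  have y'Y: "y' \<in> Y" using conj_closed[of "inv z" y] y' yz y by simp
  have "word_frac G [(z, False), (y, True), (z, True)] = ([z], [y, z])"
    using yz by (auto simp: frac_mult_def conj_word_def fs_prod_Nil fs_prod_Cons)
  moreover have "word_frac G [(y', True)] = ([], [y'])"
    using y'Y subset by (auto simp: frac_mult_def conj_word_def fs_prod_Nil)
  moreover have "stable_eq G Y [y, z] [z, y']"
    using stable_eq_of_fs_eq fs_rel1[of y Y z G] y z y' y'Y by auto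
  then have "frac_eq G Y ([z], [y, z]) ([], [y'])"
    unfolding frac_eq_def using z stable_eq_refl by (intro bexI[of _ "[]"] bexI[of _ "[z]"]) auto
  ultimately show ?thesis by simp
qed

lemma pres_eq_lists_iff:
  assumes "R \<subseteq> Y \<times> Y \<times> Y"
  shows "pres_eq Y R v w \<Longrightarrow> v \<in> lists (Y \<times> UNIV) \<longleftrightarrow> w \<in> lists (Y \<times> UNIV)"
  by (induction rule: pres_eq.induct) (use assms in auto)

lemma pres_eq_frac_eq:
  assumes R: "R \<subseteq> Y \<times> Y \<times> Y" and relator: "\<And>y y' z. (y, y', z) \<in> R \<Longrightarrow> y' = inv z \<otimes> y \<otimes> z"
  shows "pres_eq Y R v w \<Longrightarrow> v \<in> lists (Y \<times> UNIV) \<Longrightarrow> frac_eq G Y (word_frac G v) (word_frac G w)"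
proof (induction rule: pres_eq.induct)
  case (pres_refl w)
  then show ?case by (intro frac_eq_refl word_frac_closed)
next
  case (pres_sym v w)
  then have "v \<in> lists (Y \<times> UNIV)" using pres_eq_lists_iff[OF R pres_sym.hyps] by blast
  then show ?case using frac_eq_sym pres_sym.IH by blast
next
  case (pres_trans u v w)
  then have "v \<in> lists (Y \<times> UNIV)" using pres_eq_lists_iff[OF R pres_trans.hyps(1)] by blast
  then show ?case using frac_eq_trans pres_trans.IH pres_trans.prems by blast
next
  case (pres_ctxt v w u x)
  then have u: "u \<in> lists (Y \<times> UNIV)" and v: "v \<in> lists (Y \<times> UNIV)" and x: "x \<in> lists (Y \<times> UNIV)"
    by auto
  then have w: "w \<in> lists (Y \<times> UNIV)" using pres_eq_lists_iff[OF R pres_ctxt.hyps] by blast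
  have "frac_eq G Y (frac_mult G (word_frac G v) (word_frac G x)) (frac_mult G (word_frac G w) (word_frac G x))"
    using pres_ctxt.IH[OF v] by (rule frac_eq_mult_right) (simp_all add: word_frac_closed v w x)
  then have "frac_eq G Y (frac_mult G (word_frac G u) (frac_mult G (word_frac G v) (word_frac G x)))
      (frac_mult G (word_frac G u) (frac_mult G (word_frac G w) (word_frac G x)))"
    by (rule frac_eq_mult_left) (simp_all add: frac_mult_closed word_frac_closed u v w x)
  then show ?case using u v w x by (simp add: word_frac_append)
next
  case (pres_cancel y b)
  then show ?case using frac_eq_cancel_letter by simp
next
  case (pres_rel y y' z)
  then have "y \<in> Y" "z \<in> Y" using R by auto
  then show ?case using relator[OF pres_rel(1)] by (intro frac_eq_relator)
qed

lemma word_frac_positive: "w \<in> lists Y \<Longrightarrow> word_frac G (map (\<lambda>g. (g, True)) w) = ([], w)"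
proof (induction w)
  case (Cons g w)
  then have "g \<in> carrier G" using subset by auto
  with Cons show ?case by (simp add: frac_mult_def conj_word_def fs_prod_Nil)
qed simp

lemma word_val_positive: "word_val G (map (\<lambda>g. (g, True)) w) = fs_prod G w"
  by (induction w) (auto simp: word_val_def fs_prod_def letter_val_def)

lemma frac_eq_numerators:
  assumes "frac_eq G Y ([], a) ([], b)" "a \<in> lists Y" "b \<in> lists Y"
  shows "stable_eq G Y a b"
proof -
  from assms(1) obtain u v where u: "u \<in> lists Y"
    and uv: "stable_eq G Y u v" and eq: "stable_eq G Y (u @ a) (v @ b)"
    unfolding frac_eq_def by auto
  have "stable_eq G Y (u @ a @ []) (v @ b)" using eq by simp
  also have "stable_eq G Y \<dots> (u @ b @ [])"
    using stable_eq_append_right[OF stable_eq_sym[OF uv]] assms by simp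
  finally show ?thesis using stable_eq_cancel[where d = "[]", OF _ u _ assms(2,3)] by simp
qed

lemma presents_relator:
  assumes "presents G Y R" "R \<subseteq> Y \<times> Y \<times> Y" "(y, y', z) \<in> R"
  shows "y' = inv z \<otimes> y \<otimes> z"
proof -
  have yz: "y \<in> Y" "y' \<in> Y" "z \<in> Y" using assms by auto
  then have "word_val G [(z, False), (y, True), (z, True)] = word_val G [(y', True)]"
    using assms pres_rel[OF assms(3)] unfolding presents_def by auto
  moreover have "y \<in> carrier G" "y' \<in> carrier G" "z \<in> carrier G" using yz subset by auto
  ultimately show ?thesis by (simp add: word_val_def letter_val_def m_assoc)
qed

lemma stable_eq_iff_fs_prod_eq:
  assumes pres: "presents G Y R" and R: "R \<subseteq> Y \<times> Y \<times> Y" and a: "a \<in> lists Y" and b: "b \<in> lists Y"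
  shows "stable_eq G Y a b \<longleftrightarrow> fs_prod G a = fs_prod G b"
proof
  assume "fs_prod G a = fs_prod G b"
  then have val: "word_val G (map (\<lambda>g. (g, True)) a) = word_val G (map (\<lambda>g. (g, True)) b)"
    by (simp add: word_val_positive)
  have la: "map (\<lambda>g. (g, True)) a \<in> lists (Y \<times> UNIV)" and lb: "map (\<lambda>g. (g, True)) b \<in> lists (Y \<times> UNIV)"
    using a b by auto
  have "\<forall>v \<in> lists (Y \<times> UNIV). \<forall>w \<in> lists (Y \<times> UNIV). word_val G v = word_val G w \<longleftrightarrow> pres_eq Y R v w"
    using pres unfolding presents_def by (rule conjunct2[OF conjunct2])
  then have "pres_eq Y R (map (\<lambda>g. (g, True)) a) (map (\<lambda>g. (g, True)) b)"
    using la lb val by blast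
  from pres_eq_frac_eq[OF R presents_relator[OF pres R] this la]
  have "frac_eq G Y ([], a) ([], b)" using word_frac_positive a b by simp
  then show "stable_eq G Y a b" using frac_eq_numerators a b by blast
qed (rule stable_eq_fs_prod)

end

lemma equipped_group_conj_invariant:
  assumes "equipped_group G Y"
  shows "conj_invariant_subset G Y"
proof -
  from assms obtain F where "group G" and Y: "Y \<subseteq> carrier G" and F: "F \<subseteq> carrier G"
    and YF: "Y = (\<Union>g\<in>F. conj_class G g)" unfolding equipped_group_def by blast
  interpret group G by fact
  have "h \<otimes>\<^bsub>G\<^esub> y \<otimes>\<^bsub>G\<^esub> inv\<^bsub>G\<^esub> h \<in> Y" if h: "h \<in> carrier G" and y: "y \<in> Y" for h y
  proof -
    obtain g k where g: "g \<in> F" and k: "k \<in> carrier G" and "y = k \<otimes>\<^bsub>G\<^esub> g \<otimes>\<^bsub>G\<^esub> inv\<^bsub>G\<^esub> k"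
      using y YF unfolding conj_class_def by blast
    then have "h \<otimes>\<^bsub>G\<^esub> y \<otimes>\<^bsub>G\<^esub> inv\<^bsub>G\<^esub> h = (h \<otimes>\<^bsub>G\<^esub> k) \<otimes>\<^bsub>G\<^esub> g \<otimes>\<^bsub>G\<^esub> inv\<^bsub>G\<^esub> (h \<otimes>\<^bsub>G\<^esub> k)"
      using h F by (auto simp: m_assoc inv_mult_group)
    then show ?thesis using YF g h k unfolding conj_class_def by blast
  qed
  with Y show ?thesis by unfold_locales auto
qed

theorem theorem3p4:
  fixes G :: "('a, 'b) monoid_scheme" and Y :: "'a set"
  assumes "C_group G Y"
    and "s1 \<in> fs_words Y" and "s2 \<in> fs_words Y"
  shows "fs_equivalent G Y s1 s2 \<longleftrightarrow> fs_prod G s1 = fs_prod G s2"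
proof -
  from assms(1) obtain R where eg: "equipped_group G Y" and R: "R \<subseteq> Y \<times> Y \<times> Y"
    and pres: "presents G Y R" unfolding C_group_def by blast
  interpret conj_invariant_subset G Y using equipped_group_conj_invariant[OF eg] .
  have "s1 \<in> lists Y" "s2 \<in> lists Y" using assms(2,3) unfolding fs_words_def by auto
  then show ?thesis
    using fs_equivalent_iff_stable_eq[OF assms(2,3), of G] stable_eq_iff_fs_prod_eq[OF pres R] by simp
qed

end
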